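(* Let $(\mathbf X,\mathbf Y)$ be a general correlated source. There exists a sequence $\{\varepsilon_n\}_{n\ge1}$ with $\varepsilon_n\to0$ as $n\to\infty$ such that \[\overline H_s(\mathbf X|\mathbf Y)=\limsup_{n\to\infty}\frac1n\overline H_s^{\varepsilon_n}(X^n|Y^n);\] moreover, $\{\varepsilon_n\}$ can be chosen so that in addition $\frac1n\log\frac1{\varepsilon_n}\to0$.
   Context: A general correlated source $(\mathbf X,\mathbf Y)=\{(X^n,Y^n)\}_{n\ge1}$ is an arbitrary sequence of pairs of random variables on $\mathcal X^n\times\mathcal Y^n$, $\mathcal X,\mathcal Y$ finite or countably infinite (no structural assumptions; marginal probabilities positive). Logs base 2. For $x^n$ and $\varepsilon\in(0,1]$: $\overline h^\varepsilon(x^n)=\inf\{a\in\mathbb R:\sum_{y^n:\log(1/P_{X^n|Y^n}(x^n|y^n))>a}P_{Y^n|X^n}(y^n|x^n)\le\varepsilon\}$; $\overline H_s^\varepsilon(X^n|Y^n)=\sum_{x^n}P_{X^n}(x^n)\overline h^\varepsilon(x^n)$; $\overline H_s(\mathbf X|\mathbf Y)=\lim_{\varepsilon\downarrow0}\limsup_n\frac1n\overline H_s^\varepsilon(X^n|Y^n)$. *)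

theory Defs
  imports "HOL-Probability.Probability"
begin

text \<open>A general correlated source: for each n a joint pmf of (X^n, Y^n) on
  length-n sequences over countable (finite or countably infinite) alphabets.\<close>

definition PX :: "('a \<times> 'b) pmf \<Rightarrow> 'a \<Rightarrow> real" where
  "PX Q x = pmf (map_pmf fst Q) x"

definition PY :: "('a \<times> 'b) pmf \<Rightarrow> 'b \<Rightarrow> real" where
  "PY Q y = pmf (map_pmf snd Q) y"

definition PXgY :: "('a \<times> 'b) pmf \<Rightarrow> 'a \<Rightarrow> 'b \<Rightarrow> real" where
  "PXgY Q x y = pmf Q (x, y) / PY Q y"

definition PYgX :: "('a \<times> 'b) pmf \<Rightarrow> 'b \<Rightarrow> 'a \<Rightarrow> real" where
  "PYgX Q y x = pmf Q (x, y) / PX Q x"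

definition hbar :: "real \<Rightarrow> ('a \<times> 'b) pmf \<Rightarrow> 'a \<Rightarrow> ereal" where
  "hbar \<epsilon> Q x = Inf {ereal a | a.
      (\<Sum>\<^sub>\<infinity> y \<in> {y. log 2 (1 / PXgY Q x y) > a}. PYgX Q y x) \<le> \<epsilon>}"

text \<open>H-bar_s^epsilon(X^n|Y^n) = sum over x of P_X(x) * hbar(x) (values in [0,\<infinity>]
  for 0 < epsilon < 1, where hbar is nonnegative)\<close>
definition Hs_eps :: "real \<Rightarrow> ('a \<times> 'b) pmf \<Rightarrow> ereal" where
  "Hs_eps \<epsilon> Q = enn2ereal (\<Sum>\<^sub>\<infinity> x. ennreal (PX Q x) * e2ennreal (hbar \<epsilon> Q x))"

definition Hs :: "(nat \<Rightarrow> ('a \<times> 'b) pmf) \<Rightarrow> ereal" where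
  "Hs P = Lim (at_right (0::real))
     (\<lambda>\<epsilon>. limsup (\<lambda>n. ereal (1 / real n) * Hs_eps \<epsilon> (P n)))"

end

theory Submission
  imports Defs "HOL-Real_Asymp.Real_Asymp"
begin

text \<open>The map \<open>\<epsilon> \<mapsto> limsup\<^sub>n (1/n) H\<^sup>\<epsilon>(X\<^sup>n|Y\<^sup>n)\<close> is antitone, so its limit at \<open>0\<^sup>+\<close> is its
  supremum over \<open>\<epsilon> > 0\<close>. For \<open>\<epsilon>\<^sub>k = 1/(k+2)\<close> the row \<open>n \<mapsto> (1/n) H\<^sup>\<epsilon>(X\<^sup>n|Y\<^sup>n)\<close> at \<open>\<epsilon> = \<epsilon>\<^sub>k\<close> has limsup
  below that supremum; a diagonal index \<open>k(n) \<le> n\<close> tending slowly to infinity keeps the limsup of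
  the diagonal below it, while antitonicity gives the reverse inequality. Since \<open>k(n) \<le> n\<close>, the
  diagonal \<open>\<epsilon>\<^sub>n\<close> is at least \<open>1/(n+2)\<close>, whence \<open>(1/n) log(1/\<epsilon>\<^sub>n) \<to> 0\<close>.\<close>

lemma hbar_antimono: "e \<le> e' \<Longrightarrow> hbar e' Q x \<le> hbar e Q x"
  unfolding hbar_def by (rule Inf_superset_mono) auto

lemma Hs_eps_antimono:
  assumes "e \<le> e'"
  shows "Hs_eps e' Q \<le> Hs_eps e Q"
proof -
  have "(\<Sum>\<^sub>\<infinity> x. ennreal (PX Q x) * e2ennreal (hbar e' Q x))
      \<le> (\<Sum>\<^sub>\<infinity> x. ennreal (PX Q x) * e2ennreal (hbar e Q x))"
    by (intro infsum_mono nonneg_summable_on_complete mult_left_mono e2ennreal_mono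
        hbar_antimono assms) simp_all
  then show ?thesis
    unfolding Hs_eps_def by (simp add: less_eq_ennreal.rep_eq[symmetric])
qed

lemma antimono_tendsto_at_right_SUP:
  fixes F :: "real \<Rightarrow> 'a::{complete_linorder, linorder_topology}"
  assumes antimono: "\<And>e e'. a < e \<Longrightarrow> e \<le> e' \<Longrightarrow> F e' \<le> F e"
  shows "(F \<longlongrightarrow> (SUP e\<in>{a<..}. F e)) (at_right a)"
proof (rule order_tendstoI)
  fix b assume "b < (SUP e\<in>{a<..}. F e)"
  then obtain e0 where e0: "a < e0" "b < F e0"
    by (auto simp: less_SUP_iff)
  have "b < F e" if "a < e" "e < e0" for e
    using antimono[of e e0] that e0(2) by simp
  then show "eventually (\<lambda>e. b < F e) (at_right a)"
    unfolding eventually_at_right[OF e0(1)] using e0(1) by auto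
next
  fix b assume "(SUP e\<in>{a<..}. F e) < b"
  then have "F e < b" if "a < e" for e
    using SUP_upper[of e "{a<..}" F] that by simp
  then show "eventually (\<lambda>e. F e < b) (at_right a)"
    using eventually_at_right_less[of a] by (rule eventually_mono[rotated])
qed

text \<open>A slowly growing index: however fast the thresholds \<open>N k\<close> grow, \<open>k(n)\<close> only advances once
  \<open>n\<close> has passed \<open>N (k(n))\<close>.\<close>

lemma diagonal_index_exists:
  fixes N :: "nat \<Rightarrow> nat"
  shows "\<exists>kk. (\<forall>n. kk n \<le> n) \<and> filterlim kk at_top sequentially
           \<and> (\<forall>\<^sub>F n in sequentially. N (kk n) \<le> n)"
proof -
  define A where "A n = {j. j \<le> n \<and> N j \<le> n}" for n
  define kk where "kk n = Max ({0} \<union> A n)" for n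
  have fin: "finite ({0} \<union> A n)" for n
    unfolding A_def by auto
  have "kk n \<le> n" for n
    unfolding kk_def using fin by (subst Max_le_iff) (auto simp: A_def)
  moreover have "K \<le> kk n" if "max K (N K) \<le> n" for K n
    unfolding kk_def using fin that by (intro Max_ge) (auto simp: A_def)
  then have "filterlim kk at_top sequentially"
    unfolding filterlim_at_top eventually_sequentially by blast
  moreover have "N (kk n) \<le> n" if "N 0 \<le> n" for n
  proof -
    have "kk n \<in> {0} \<union> A n"
      unfolding kk_def using fin by (intro Max_in) auto
    with that show ?thesis by (auto simp: A_def)
  qed
  then have "\<forall>\<^sub>F n in sequentially. N (kk n) \<le> n"
    unfolding eventually_sequentially by blast
  ultimately show ?thesis by blast
qed

lemma limsup_diagonal_le:
  fixes g :: "nat \<Rightarrow> nat \<Rightarrow> 'a::{complete_linorder, linorder_topology, dense_linorder,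
      first_countable_topology}"
  assumes rows: "\<And>k. limsup (g k) \<le> S"
  shows "\<exists>kk. (\<forall>n. kk n \<le> n) \<and> filterlim kk at_top sequentially
           \<and> limsup (\<lambda>n. g (kk n) n) \<le> S"
proof (cases "S = top")
  case True
  then show ?thesis by (intro exI[of _ "\<lambda>n. n"]) (auto simp: filterlim_ident)
next
  case False
  then obtain c where c_gt: "\<And>j. S < c j" and c_lim: "c \<longlonglongrightarrow> S"
    using approx_from_above_dense_linorder[of S top] top.not_eq_extremum by auto
  have "\<forall>\<^sub>F m in sequentially. g k m < c k" for k
    using Limsup_lessD[of sequentially "g k" "c k"] rows[of k] c_gt[of k] by (meson le_less_trans)
  then obtain N where N: "\<And>k m. N k \<le> m \<Longrightarrow> g k m < c k"
    unfolding eventually_sequentially by metis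
  obtain kk where kk_le: "\<forall>n. kk n \<le> n" and kk_lim: "filterlim kk at_top sequentially"
    and kk_N: "\<forall>\<^sub>F n in sequentially. N (kk n) \<le> n"
    using diagonal_index_exists by blast
  have "\<forall>\<^sub>F n in sequentially. g (kk n) n < y" if "S < y" for y
  proof -
    have "(\<lambda>n. c (kk n)) \<longlonglongrightarrow> S"
      using filterlim_compose[OF c_lim kk_lim] .
    then have "\<forall>\<^sub>F n in sequentially. c (kk n) < y"
      using order_tendstoD(2) that by blast
    with kk_N show ?thesis
      by eventually_elim (use N in \<open>meson less_trans\<close>)
  qed
  then have "limsup (\<lambda>n. g (kk n) n) \<le> S"
    unfolding Limsup_le_iff by blast
  with kk_le kk_lim show ?thesis by blast
qed

lemma vanishing_eps_attains_Lim_limsup: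
  fixes f :: "nat \<Rightarrow> real \<Rightarrow> ereal"
  assumes antimono: "\<And>n e e'. 0 < e \<Longrightarrow> e \<le> e' \<Longrightarrow> f n e' \<le> f n e"
  shows "\<exists>\<epsilon>. (\<forall>n. 1 / (real n + 2) \<le> \<epsilon> n \<and> \<epsilon> n \<le> 1 / 2) \<and> \<epsilon> \<longlonglongrightarrow> 0
           \<and> Lim (at_right 0) (\<lambda>e. limsup (\<lambda>n. f n e)) = limsup (\<lambda>n. f n (\<epsilon> n))"
proof -
  define F where "F e = limsup (\<lambda>n. f n e)" for e
  define S where "S = (SUP e\<in>{0<..}. F e)"
  have "(F \<longlongrightarrow> S) (at_right 0)"
    unfolding S_def F_def
    by (intro antimono_tendsto_at_right_SUP Limsup_mono always_eventually allI antimono)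
  then have Lim_F: "Lim (at_right 0) F = S"
    by (rule tendsto_Lim[OF trivial_limit_at_right_real])
  have "limsup (\<lambda>n. f n (1 / (real k + 2))) \<le> S" for k
    unfolding S_def F_def by (rule SUP_upper) simp
  from limsup_diagonal_le[of "\<lambda>k n. f n (1 / (real k + 2))", OF this]
  obtain kk where kk_le: "\<forall>n. kk n \<le> n" and kk_lim: "filterlim kk at_top sequentially"
    and upper: "limsup (\<lambda>n. f n (1 / (real (kk n) + 2))) \<le> S"
    by blast
  define \<epsilon> where "\<epsilon> n = 1 / (real (kk n) + 2)" for n
  have bounds: "1 / (real n + 2) \<le> \<epsilon> n \<and> \<epsilon> n \<le> 1 / 2" for n
    using kk_le[rule_format, of n] unfolding \<epsilon>_def by (simp add: frac_le)
  have "(\<lambda>k. 1 / (real k + 2)) \<longlonglongrightarrow> 0"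
    by real_asymp
  from filterlim_compose[OF this kk_lim] have \<epsilon>_lim: "\<epsilon> \<longlonglongrightarrow> 0"
    unfolding \<epsilon>_def .
  have "F e \<le> limsup (\<lambda>n. f n (\<epsilon> n))" if "0 < e" for e
  proof -
    have "\<forall>\<^sub>F n in sequentially. f n e \<le> f n (\<epsilon> n)"
      using order_tendstoD(2)[OF \<epsilon>_lim that]
    proof (rule eventually_mono)
      fix n assume "\<epsilon> n < e"
      moreover have "0 < \<epsilon> n" unfolding \<epsilon>_def by simp
      ultimately show "f n e \<le> f n (\<epsilon> n)" by (simp add: antimono)
    qed
    then show ?thesis
      unfolding F_def by (rule Limsup_mono)
  qed
  then have "S \<le> limsup (\<lambda>n. f n (\<epsilon> n))"
    unfolding S_def by (rule SUP_least) simp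
  then have "Lim (at_right 0) F = limsup (\<lambda>n. f n (\<epsilon> n))"
    unfolding Lim_F using upper[folded \<epsilon>_def] by (rule antisym)
  with bounds \<epsilon>_lim show ?thesis
    unfolding F_def[abs_def] by (intro exI[of _ \<epsilon>]) simp
qed

lemma log_inverse_over_n_tendsto_0:
  fixes \<epsilon> :: "nat \<Rightarrow> real"
  assumes lower: "\<And>n. 1 / (real n + 2) \<le> \<epsilon> n" and upper: "\<And>n. \<epsilon> n \<le> 1"
  shows "(\<lambda>n. (1 / real n) * log 2 (1 / \<epsilon> n)) \<longlonglongrightarrow> 0"
proof (rule tendsto_sandwich)
  have pos: "0 < \<epsilon> n" for n
    using lower[of n] by (rule less_le_trans[rotated]) simp
  then show "\<forall>\<^sub>F n in sequentially. 0 \<le> (1 / real n) * log 2 (1 / \<epsilon> n)"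
    using upper by (intro always_eventually allI mult_nonneg_nonneg) simp_all
  have "log 2 (1 / \<epsilon> n) \<le> log 2 (real n + 2)" for n
    using pos[of n] lower[of n] by (simp add: field_simps)
  then show "\<forall>\<^sub>F n in sequentially.
      (1 / real n) * log 2 (1 / \<epsilon> n) \<le> (1 / real n) * log 2 (real n + 2)"
    by (intro always_eventually allI mult_left_mono) simp_all
  show "(\<lambda>n. (1 / real n) * log 2 (real n + 2)) \<longlonglongrightarrow> 0"
    by real_asymp
qed simp

theorem lemma5:
  fixes P :: "nat \<Rightarrow> ('a::countable list \<times> 'b::countable list) pmf"
  assumes "\<forall>n. set_pmf (P n) \<subseteq> {(x, y). length x = n \<and> length y = n}"
  shows "\<exists>\<epsilon> :: nat \<Rightarrow> real. (\<forall>n. 0 < \<epsilon> n \<and> \<epsilon> n < 1) \<and> \<epsilon> \<longlonglongrightarrow> 0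
     \<and> Hs P = limsup (\<lambda>n. ereal (1 / real n) * Hs_eps (\<epsilon> n) (P n))
     \<and> (\<lambda>n. (1 / real n) * log 2 (1 / \<epsilon> n)) \<longlonglongrightarrow> 0"
proof -
  have Hs_antimono: "\<And>n e e'. 0 < e \<Longrightarrow> e \<le> e' \<Longrightarrow>
      ereal (1 / real n) * Hs_eps e' (P n) \<le> ereal (1 / real n) * Hs_eps e (P n)"
    by (intro ereal_mult_left_mono Hs_eps_antimono) simp_all
  from vanishing_eps_attains_Lim_limsup[where f = "\<lambda>n e. ereal (1 / real n) * Hs_eps e (P n)"]
  obtain \<epsilon> where bounds: "\<forall>n. 1 / (real n + 2) \<le> \<epsilon> n \<and> \<epsilon> n \<le> 1 / 2"
    and \<epsilon>_lim: "\<epsilon> \<longlonglongrightarrow> 0"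
    and Hs_eq: "Lim (at_right 0) (\<lambda>e. limsup (\<lambda>n. ereal (1 / real n) * Hs_eps e (P n)))
      = limsup (\<lambda>n. ereal (1 / real n) * Hs_eps (\<epsilon> n) (P n))"
    using Hs_antimono by meson
  have lower: "1 / (real n + 2) \<le> \<epsilon> n" and half: "\<epsilon> n \<le> 1 / 2" for n
    using bounds by simp_all
  have "0 < \<epsilon> n" for n
    using lower[of n] by (rule less_le_trans[rotated]) simp
  moreover have below_1: "\<epsilon> n < 1" for n
    using half[of n] by simp
  moreover have "(\<lambda>n. (1 / real n) * log 2 (1 / \<epsilon> n)) \<longlonglongrightarrow> 0"
    by (rule log_inverse_over_n_tendsto_0[OF lower less_imp_le[OF below_1]])
  ultimately show ?thesis
    using \<epsilon>_lim Hs_eq unfolding Hs_def by (intro exI[of _ \<epsilon>]) simp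
qed

end
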